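(* Let $m\in\mathbb{N}$, $m\geq 2$, let $\Sigma\subset\{0,1,\dots,m-1\}^{\mathbb{N}}$ be a (one-sided) subshift of finite type, and let $$A=\Big\{\sum_{i=1}^\infty \frac{x_i}{m^i}:(x_i)\in\Sigma\Big\}.$$ If $A$ is nowhere dense in $[0,1]$, then for every $t\in(0,1)$ that has a universal $m$-adic expansion, $$A-t\subset\mathbb{Q}^c,\qquad A+t\subset\mathbb{Q}^c,\qquad \frac{A}{t}\subset\mathbb{Q}^c.$$ Moreover, if $t\in(1,\infty)$ and $1/t$ has a universal $m$-adic expansion, then $tA\subset\mathbb{Q}^c$.
   Context: An $m$-adic expansion of $t\in(0,1)$ is a sequence $(t_k)\in\{0,1,\dots,m-1\}^{\mathbb{N}}$ with $t=\sum_{k\geq1}t_k m^{-k}$. Such an expansion is universal if for every $k\geq1$ and every word $x_1\cdots x_k\in\{0,\dots,m-1\}^k$ there is $k_0\in\mathbb{N}$ with $t_{k_0+1}\cdots t_{k_0+k}=x_1\cdots x_k$; $t$ has a universal $m$-adic expansion if some $m$-adic expansion of it is universal. A subshift of finite type over $\{0,\dots,m-1\}$ is the set of sequences in $\{0,\dots,m-1\}^{\mathbb{N}}$ avoiding a given finite list of forbidden words. Notation: $A\pm t=\{x\pm t:x\in A\}$, $tA=\{tx:x\in A\setminus\{0\}\}$, $\frac{A}{t}=\{t^{-1}x:x\in A\setminus\{0\}\}$. $\mathbb{Q}^c$ denotes the set of irrational real numbers. *)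

theory Defs
  imports "HOL-Analysis.Analysis"
begin

text \<open>Sequences in {0,...,m-1}^N are represented as nat => nat, indexed from 0
  (so x 0 is the paper's x_1). Words are lists.\<close>

definition digit_seq :: "nat \<Rightarrow> (nat \<Rightarrow> nat) \<Rightarrow> bool" where
  "digit_seq m x \<longleftrightarrow> (\<forall>k. x k < m)"

definition occurs_at :: "nat list \<Rightarrow> (nat \<Rightarrow> nat) \<Rightarrow> nat \<Rightarrow> bool" where
  "occurs_at w x k0 \<longleftrightarrow> (\<forall>i<length w. x (k0 + i) = w ! i)"

definition sft :: "nat \<Rightarrow> nat list set \<Rightarrow> (nat \<Rightarrow> nat) set" where
  "sft m F = {x. digit_seq m x \<and> (\<forall>w\<in>F. \<forall>k0. \<not> occurs_at w x k0)}"

definition madic_value :: "nat \<Rightarrow> (nat \<Rightarrow> nat) \<Rightarrow> real" where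
  "madic_value m x = (\<Sum>i. real (x i) / real m ^ (i + 1))"

definition is_madic_expansion :: "nat \<Rightarrow> real \<Rightarrow> (nat \<Rightarrow> nat) \<Rightarrow> bool" where
  "is_madic_expansion m t x \<longleftrightarrow> digit_seq m x \<and> t = madic_value m x"

definition universal_seq :: "nat \<Rightarrow> (nat \<Rightarrow> nat) \<Rightarrow> bool" where
  "universal_seq m x \<longleftrightarrow>
     (\<forall>w. length w \<ge> 1 \<longrightarrow> (\<forall>a\<in>set w. a < m) \<longrightarrow> (\<exists>k0. occurs_at w x k0))"

definition has_universal_expansion :: "nat \<Rightarrow> real \<Rightarrow> bool" where
  "has_universal_expansion m t \<longleftrightarrow> (\<exists>x. is_madic_expansion m t x \<and> universal_seq m x)"

definition scale_set :: "real \<Rightarrow> real set \<Rightarrow> real set" where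
  "scale_set t A = (\<lambda>x. t * x) ` (A - {0})"

definition div_set :: "real set \<Rightarrow> real \<Rightarrow> real set" where
  "div_set A t = (\<lambda>x. x / t) ` (A - {0})"

end

theory Submission imports Defs begin

text \<open>
  Write \<open>s\<^sub>n\<close> for the value of the \<open>n\<close>-fold shifted expansion of \<open>t\<close>. Since the expansion
  is universal, the \<open>s\<^sub>n\<close> are dense in \<open>[0,1]\<close>. Both \<open>A\<close> (the image of a shift-invariant
  sequence space) and the \<open>s\<^sub>n\<close> are stable under \<open>y \<mapsto> m\<^sup>n y\<close> modulo integers, so a
  rational affine relation \<open>d t = u a + v\<close> with \<open>a \<in> A\<close> propagates to \<open>d s\<^sub>n = u a' + N\<close>
  with \<open>a' \<in> A\<close> and an integer \<open>N\<close> in a bounded range. Thus every \<open>s\<^sub>n\<close> lies in a finite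
  union of affine images of \<open>closure A\<close>, a closed nowhere dense set, contradicting density.
  Each of the four claims is such an affine relation between \<open>t\<close> (or \<open>1/t\<close>), a point of \<open>A\<close>
  and a rational number.
\<close>

definition shiftseq :: "nat \<Rightarrow> (nat \<Rightarrow> nat) \<Rightarrow> nat \<Rightarrow> nat" where
  "shiftseq n x = (\<lambda>i. x (i + n))"

lemma digit_seq_shiftseq: "digit_seq m x \<Longrightarrow> digit_seq m (shiftseq n x)"
  by (simp add: digit_seq_def shiftseq_def)

lemma sft_shiftseq: "x \<in> sft m F \<Longrightarrow> shiftseq n x \<in> sft m F"
  unfolding sft_def occurs_at_def shiftseq_def digit_seq_def
  by (auto simp: add.assoc add.commute) (metis add.commute add.left_commute)

lemma madic_value_summable_bounded:
  assumes m2: "m \<ge> 2" and d: "digit_seq m x"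
  shows "summable (\<lambda>i. real (x i) / real m ^ (i + 1))"
    and "0 \<le> madic_value m x" and "madic_value m x \<le> 1"
proof -
  have mpos: "real m > 1" using m2 by simp
  have g: "(\<lambda>i. (real m - 1) / real m * (1 / real m) ^ i) sums
             ((real m - 1) / real m * (1 / (1 - 1 / real m)))"
    by (intro sums_mult geometric_sums) (use mpos in simp)
  have "(real m - 1) / real m * (1 / (1 - 1 / real m)) = 1"
    using mpos by (simp add: field_simps)
  with g have g1: "(\<lambda>i. (real m - 1) / real m ^ (i + 1)) sums 1"
    by (simp add: power_divide field_simps)
  have le: "real (x i) / real m ^ (i + 1) \<le> (real m - 1) / real m ^ (i + 1)" for i
  proof -
    have "x i < m" using d by (simp add: digit_seq_def)
    then have "real (x i) \<le> real m - 1" by linarith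
    then show ?thesis using mpos by (intro divide_right_mono) auto
  qed
  show s: "summable (\<lambda>i. real (x i) / real m ^ (i + 1))"
    by (rule summable_comparison_test[OF _ sums_summable[OF g1]]) (use le in auto)
  show "0 \<le> madic_value m x" unfolding madic_value_def
    by (intro suminf_nonneg s) auto
  show "madic_value m x \<le> 1" unfolding madic_value_def
    using suminf_le[OF le s sums_summable[OF g1]] sums_unique[OF g1] by simp
qed

lemma madic_value_split:
  assumes m2: "m \<ge> 2" and d: "digit_seq m x"
  shows "madic_value m x =
    (\<Sum>i<n. real (x i) / real m ^ (i + 1)) + madic_value m (shiftseq n x) / real m ^ n"
proof -
  have s: "summable (\<lambda>i. real (x i) / real m ^ (i + 1))"
    using madic_value_summable_bounded[OF m2 d] by simp
  have s2: "summable (\<lambda>i. real (shiftseq n x i) / real m ^ (i + 1))"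
    using madic_value_summable_bounded[OF m2 digit_seq_shiftseq[OF d]] by simp
  have "(\<Sum>i. real (x (i + n)) / real m ^ (i + n + 1)) =
        (\<Sum>i. real (shiftseq n x i) / real m ^ (i + 1) / real m ^ n)"
    by (simp add: shiftseq_def power_add field_simps)
  also have "\<dots> = madic_value m (shiftseq n x) / real m ^ n"
    unfolding madic_value_def by (rule suminf_divide[OF s2])
  finally show ?thesis
    unfolding madic_value_def[of m x] using suminf_split_initial_segment[OF s, of n] by simp
qed

lemma madic_value_shiftseq_Ints:
  assumes m2: "m \<ge> 2" and d: "digit_seq m x"
  shows "real m ^ n * madic_value m x - madic_value m (shiftseq n x) \<in> \<int>"
proof -
  have mpos: "real m > 0" using m2 by simp
  have "real m ^ n * (\<Sum>i<n. real (x i) / real m ^ (i + 1)) = (\<Sum>i<n. real (x i * m ^ (n - Suc i)))"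
    unfolding sum_distrib_left
  proof (rule sum.cong[OF refl])
    fix i assume "i \<in> {..<n}"
    then have "n = (n - Suc i) + (i + 1)" by simp
    then have "real m ^ n = real m ^ (n - Suc i) * real m ^ (i + 1)"
      by (metis power_add)
    then show "real m ^ n * (real (x i) / real m ^ (i + 1)) = real (x i * m ^ (n - Suc i))"
      using mpos by simp
  qed
  then have "real m ^ n * madic_value m x - madic_value m (shiftseq n x) =
             real (\<Sum>i<n. x i * m ^ (n - Suc i))"
    using madic_value_split[OF m2 d, of n] mpos by (simp add: field_simps)
  then show ?thesis by (simp only: Ints_of_nat)
qed

subsection \<open>Universal expansions have dense shift orbits\<close>

definition madic_digit :: "nat \<Rightarrow> real \<Rightarrow> nat \<Rightarrow> nat" where
  "madic_digit m c i = nat (\<lfloor>c * real m ^ Suc i\<rfloor> mod int m)"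

lemma madic_digit_less: "m > 0 \<Longrightarrow> madic_digit m c i < m"
  unfolding madic_digit_def by (simp add: nat_less_iff)

lemma floor_power_Suc_madic_digit:
  assumes "m > 0"
  shows "real_of_int \<lfloor>c * real m ^ Suc L\<rfloor> =
    real m * real_of_int \<lfloor>c * real m ^ L\<rfloor> + real (madic_digit m c L)"
proof -
  have "\<lfloor>c * real m ^ Suc L / real_of_int (int m)\<rfloor> = \<lfloor>c * real m ^ Suc L\<rfloor> div int m"
    by (rule floor_divide_real_eq_div) simp
  moreover have "c * real m ^ Suc L / real_of_int (int m) = c * real m ^ L"
    using assms by simp
  ultimately have "\<lfloor>c * real m ^ Suc L\<rfloor> = int m * \<lfloor>c * real m ^ L\<rfloor> + \<lfloor>c * real m ^ Suc L\<rfloor> mod int m"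
    by (metis div_mult_mod_eq mult.commute)
  moreover have "real (madic_digit m c L) = real_of_int (\<lfloor>c * real m ^ Suc L\<rfloor> mod int m)"
    using assms unfolding madic_digit_def by simp
  ultimately show ?thesis
    by (metis of_int_add of_int_mult of_int_of_nat_eq)
qed

lemma sum_madic_digit:
  assumes "m > 0"
  shows "(\<Sum>i<L. real (madic_digit m c i) / real m ^ (i + 1)) =
    real_of_int \<lfloor>c * real m ^ L\<rfloor> / real m ^ L - real_of_int \<lfloor>c\<rfloor>"
proof (induction L)
  case 0
  then show ?case by simp
next
  case (Suc L)
  have "(\<Sum>i<Suc L. real (madic_digit m c i) / real m ^ (i + 1)) =
    real_of_int \<lfloor>c * real m ^ L\<rfloor> / real m ^ L - real_of_int \<lfloor>c\<rfloor>
      + real (madic_digit m c L) / real m ^ Suc L"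
    using Suc by simp
  also have "\<dots> = (real m * real_of_int \<lfloor>c * real m ^ L\<rfloor> + real (madic_digit m c L)) / real m ^ Suc L
      - real_of_int \<lfloor>c\<rfloor>"
    using assms by (simp add: field_simps)
  finally show ?case
    by (simp only: floor_power_Suc_madic_digit[OF assms, symmetric])
qed

lemma madic_value_approx_by_prefix:
  assumes m2: "m \<ge> 2" and z: "digit_seq m z" and c: "0 \<le> c" "c < 1"
    and prefix: "\<forall>i<L. z i = madic_digit m c i"
  shows "\<bar>madic_value m z - c\<bar> \<le> 1 / real m ^ L"
proof -
  define tail where "tail = madic_value m (shiftseq L z)"
  have tail: "0 \<le> tail" "tail \<le> 1"
    unfolding tail_def using madic_value_summable_bounded[OF m2 digit_seq_shiftseq[OF z]] by auto
  have mL: "real m ^ L > 0" using m2 by simp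
  have "\<lfloor>c\<rfloor> = 0" using c by (simp add: floor_eq_iff)
  then have "(\<Sum>i<L. real (z i) / real m ^ (i + 1)) = real_of_int \<lfloor>c * real m ^ L\<rfloor> / real m ^ L"
    using prefix sum_madic_digit[of m c L] m2 by simp
  then have "real m ^ L * (madic_value m z - c) = real_of_int \<lfloor>c * real m ^ L\<rfloor> - c * real m ^ L + tail"
    using madic_value_split[OF m2 z, of L] mL unfolding tail_def by (simp add: field_simps)
  moreover have "real_of_int \<lfloor>c * real m ^ L\<rfloor> \<le> c * real m ^ L" "c * real m ^ L < real_of_int \<lfloor>c * real m ^ L\<rfloor> + 1"
    by linarith+
  ultimately have "\<bar>real m ^ L * (madic_value m z - c)\<bar> \<le> 1"
    using tail by linarith
  then show ?thesis
    using mL by (simp add: abs_mult pos_le_divide_eq mult.commute)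
qed

lemma universal_shiftseq_dense:
  assumes m2: "m \<ge> 2" and x: "digit_seq m x" "universal_seq m x"
    and c: "0 \<le> c" "c < 1" and e: "e > 0"
  shows "\<exists>n. \<bar>madic_value m (shiftseq n x) - c\<bar> < e"
proof -
  obtain L0 where "1 / e < real m ^ L0"
    using real_arch_pow[of "real m" "1 / e"] m2 by auto
  moreover have "real m ^ L0 \<le> real m ^ Suc L0"
    by (rule power_increasing) (use m2 in auto)
  ultimately have "1 / e < real m ^ Suc L0"
    by linarith
  then have L: "1 / real m ^ Suc L0 < e"
    using e m2 by (simp add: field_simps)
  define w where "w = map (madic_digit m c) [0..<Suc L0]"
  have "\<forall>a\<in>set w. a < m" "length w \<ge> 1"
    using m2 madic_digit_less[of m c] by (auto simp: w_def)
  then obtain n where "occurs_at w x n"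
    using x(2) unfolding universal_seq_def by blast
  then have "\<forall>i<Suc L0. shiftseq n x i = madic_digit m c i"
    by (auto simp: occurs_at_def w_def shiftseq_def add.commute simp del: upt_Suc)
  then have "\<bar>madic_value m (shiftseq n x) - c\<bar> \<le> 1 / real m ^ Suc L0"
    by (intro madic_value_approx_by_prefix[OF m2 digit_seq_shiftseq[OF x(1)] c])
  then show ?thesis using L by (intro exI[of _ n]) linarith
qed

subsection \<open>Nowhere dense sets of reals\<close>

lemma interior_affine_image_empty:
  fixes S :: "real set"
  assumes "interior S = {}" and "\<alpha> \<noteq> 0"
  shows "interior ((\<lambda>y. \<alpha> * y + \<beta>) ` S) = {}"
proof -
  have "(\<lambda>y. \<alpha> * y + \<beta>) ` S = (+) \<beta> ` ((*) \<alpha> ` S)"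
    by (auto simp: image_image add.commute)
  moreover have "interior ((*) \<alpha> ` S) = (*) \<alpha> ` interior S"
    using assms(2) by (intro interior_injective_linear_image)
      (auto simp: inj_on_def bounded_linear_mult_right bounded_linear.linear)
  ultimately show ?thesis
    using assms(1) by (simp add: interior_translation)
qed

lemma interior_finite_Union_closed_empty:
  fixes B :: "'i \<Rightarrow> 'a::topological_space set"
  assumes "finite I" and "\<And>i. i \<in> I \<Longrightarrow> closed (B i) \<and> interior (B i) = {}"
  shows "interior (\<Union>i\<in>I. B i) = {}"
  using assms
proof (induction I rule: finite_induct)
  case empty
  then show ?case by simp
next
  case (insert i I)
  have "interior (B i \<union> (\<Union>j\<in>I. B j)) = interior (B i)"
    by (rule interior_closed_Un_empty_interior) (use insert in auto)
  then show ?case using insert by simp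
qed

lemma ball_avoiding_finite_affine_images:
  fixes S :: "real set"
  assumes "compact S" and "interior S = {}" and "finite B" and "\<alpha> \<noteq> 0"
  obtains c e where "0 < c" "c < 1" "0 < e"
    "\<And>y. \<bar>y - c\<bar> < e \<Longrightarrow> y \<notin> (\<Union>\<beta>\<in>B. (\<lambda>x. \<alpha> * x + \<beta>) ` S)"
proof -
  define U where "U = (\<Union>\<beta>\<in>B. (\<lambda>x. \<alpha> * x + \<beta>) ` S)"
  have closed_image: "closed ((\<lambda>x. \<alpha> * x + \<beta>) ` S)" for \<beta>
    using assms(1) by (intro compact_imp_closed compact_continuous_image continuous_intros)
  have "interior U = {}"
    unfolding U_def using closed_image interior_affine_image_empty[OF assms(2,4)] assms(3)
    by (intro interior_finite_Union_closed_empty) auto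
  then have "\<not> {0<..<1::real} \<subseteq> U"
    using interior_maximal[of "{0<..<1::real}" U] by (auto dest: subset_empty [THEN iffD1])
  then obtain c where c: "0 < c" "c < 1" "c \<notin> U"
    by (auto simp: subset_iff)
  have "open (- U)"
    unfolding U_def using closed_image assms(3) by (intro open_Compl closed_UN) auto
  then obtain e where "e > 0" "ball c e \<subseteq> - U"
    using c open_contains_ball by blast
  with c show ?thesis
    using that unfolding U_def by (force simp: ball_def dist_real_def abs_minus_commute)
qed

lemma madic_image_sft_subset:
  assumes "m \<ge> 2"
  shows "madic_value m ` sft m F \<subseteq> {0..1}"
  using madic_value_summable_bounded[OF assms] by (auto simp: sft_def)

lemma madic_image_sft_shift_Ints:
  assumes m2: "m \<ge> 2" and a: "a \<in> madic_value m ` sft m F"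
  shows "\<exists>a'\<in>madic_value m ` sft m F. real m ^ n * a - a' \<in> \<int>"
proof -
  obtain y where y: "y \<in> sft m F" "a = madic_value m y" using a by auto
  then have "real m ^ n * a - madic_value m (shiftseq n y) \<in> \<int>"
    by (simp add: madic_value_shiftseq_Ints[OF m2] sft_def)
  then show ?thesis using sft_shiftseq[OF y(1)] by blast
qed

subsection \<open>No rational affine relation with a universal number\<close>

context
  fixes m :: nat and A :: "real set"
  assumes m2: "m \<ge> 2"
    and A_subset: "A \<subseteq> {0..1}"
    and A_shift: "\<forall>a\<in>A. \<forall>n. \<exists>a'\<in>A. real m ^ n * a - a' \<in> \<int>"
    and A_nowhere_dense: "interior (closure A) = {}"
begin

lemma shiftseq_integer_relation:
  fixes u d v :: int
  assumes x: "digit_seq m x" and d: "d > 0" and a: "a \<in> A"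
    and rel: "real_of_int d * madic_value m x = real_of_int u * a + real_of_int v"
  obtains a' N where "a' \<in> A" "N \<in> {-\<bar>u\<bar>..d+\<bar>u\<bar>}"
    "real_of_int d * madic_value m (shiftseq n x) = real_of_int u * a' + real_of_int N"
proof -
  define t s where "t = madic_value m x" and "s = madic_value m (shiftseq n x)"
  obtain a' where a': "a' \<in> A" "real m ^ n * a - a' \<in> \<int>"
    using A_shift a by blast
  have "real m ^ n * t - s \<in> \<int>"
    unfolding t_def s_def by (rule madic_value_shiftseq_Ints[OF m2 x])
  moreover have "real_of_int d * t - real_of_int u * a = real_of_int v"
    using rel unfolding t_def s_def by simp
  moreover have "real_of_int d * s - real_of_int u * a' =
      real m ^ n * (real_of_int d * t - real_of_int u * a) - real_of_int d * (real m ^ n * t - s)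
      + real_of_int u * (real m ^ n * a - a')"
    by (simp add: algebra_simps)
  ultimately have "real_of_int d * s - real_of_int u * a' \<in> \<int>"
    using a'(2) by (auto intro!: Ints_add Ints_diff Ints_mult Ints_power)
  then obtain N where N: "real_of_int N = real_of_int d * s - real_of_int u * a'"
    by (auto elim: Ints_cases)
  have "0 \<le> s" "s \<le> 1"
    unfolding t_def s_def using madic_value_summable_bounded[OF m2 digit_seq_shiftseq[OF x]] by auto
  then have "0 \<le> real_of_int d * s" "real_of_int d * s \<le> real_of_int d"
    using d by (simp_all add: mult_left_le)
  moreover have "\<bar>real_of_int u * a'\<bar> \<le> \<bar>real_of_int u\<bar>"
    using a' A_subset by (auto simp: abs_mult mult_left_le)
  ultimately have "real_of_int (- \<bar>u\<bar>) \<le> real_of_int N" "real_of_int N \<le> real_of_int (d + \<bar>u\<bar>)"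
    using N by (simp_all add: abs_le_iff)
  then have "N \<in> {-\<bar>u\<bar>..d+\<bar>u\<bar>}"
    by (simp only: of_int_le_iff) simp
  with a'(1) N show ?thesis
    using that unfolding t_def s_def by simp
qed

lemma universal_no_integer_relation:
  fixes u d v :: int
  assumes t: "has_universal_expansion m t" and u: "u \<noteq> 0" and d: "d > 0" and a: "a \<in> A"
  shows "real_of_int d * t \<noteq> real_of_int u * a + real_of_int v"
proof
  assume rel: "real_of_int d * t = real_of_int u * a + real_of_int v"
  obtain x where x: "digit_seq m x" "universal_seq m x" and tx: "t = madic_value m x"
    using t unfolding has_universal_expansion_def is_madic_expansion_def by blast
  have "closure A \<subseteq> {0..1}"
    using A_subset by (intro closure_minimal) auto
  then have "compact (closure A)"
    by (meson bounded_subset closed_closure compact_Icc compact_eq_bounded_closed)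
  then obtain c e where c: "0 < c" "c < 1" and e: "0 < e" and avoid:
      "\<And>y. \<bar>y - c\<bar> < e \<Longrightarrow> y \<notin> (\<Union>\<beta>\<in>(\<lambda>N. real_of_int N / real_of_int d) ` {-\<bar>u\<bar>..d+\<bar>u\<bar>}.
          (\<lambda>x. real_of_int u / real_of_int d * x + \<beta>) ` closure A)"
    by (rule ball_avoiding_finite_affine_images[OF _ A_nowhere_dense,
          where B = "(\<lambda>N. real_of_int N / real_of_int d) ` {-\<bar>u\<bar>..d+\<bar>u\<bar>}"
            and \<alpha> = "real_of_int u / real_of_int d"]) (use u d in auto)
  obtain n where n: "\<bar>madic_value m (shiftseq n x) - c\<bar> < e"
    using universal_shiftseq_dense[OF m2 x less_imp_le[OF c(1)] c(2) e] by blast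
  obtain a' N where "a' \<in> A" "N \<in> {-\<bar>u\<bar>..d+\<bar>u\<bar>}"
    and "real_of_int d * madic_value m (shiftseq n x) = real_of_int u * a' + real_of_int N"
    using shiftseq_integer_relation[OF x(1) d a rel[unfolded tx]] .
  moreover from this(3) have "madic_value m (shiftseq n x) =
      real_of_int u / real_of_int d * a' + real_of_int N / real_of_int d"
    using d by (simp add: field_simps)
  ultimately show False
    using avoid[OF n] closure_subset by blast
qed

lemma universal_no_rational_relation:
  assumes t: "has_universal_expansion m t"
    and \<alpha>: "\<alpha> \<in> \<rat>" "\<alpha> \<noteq> 0" and \<beta>: "\<beta> \<in> \<rat>" and a: "a \<in> A"
  shows "t \<noteq> \<alpha> * a + \<beta>"
proof
  assume rel: "t = \<alpha> * a + \<beta>"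
  obtain p q :: int where pq: "q > 0" "\<alpha> = real_of_int p / real_of_int q"
    using \<alpha>(1) by (metis Rats_cases')
  obtain p' q' :: int where pq': "q' > 0" "\<beta> = real_of_int p' / real_of_int q'"
    using \<beta> by (metis Rats_cases')
  have "p \<noteq> 0" using \<alpha>(2) pq by auto
  moreover have "real_of_int (q * q') * t = real_of_int (p * q') * a + real_of_int (p' * q)"
    using rel pq pq' by (simp add: field_simps)
  ultimately show False
    using universal_no_integer_relation[OF t, of "p * q'" "q * q'" a "p' * q"] pq pq' a
    by simp
qed

lemma universal_translates_irrational:
  assumes t: "has_universal_expansion m t"
  shows "(\<lambda>x. x - t) ` A \<subseteq> - \<rat>" and "(\<lambda>x. x + t) ` A \<subseteq> - \<rat>"
proof safe
  show False if "a \<in> A" "a - t \<in> \<rat>" for a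
    using universal_no_rational_relation[OF t _ _ _ that(1), of 1 "t - a"] that(2)
      Rats_minus_iff[of "a - t"] by simp
  show False if "a \<in> A" "a + t \<in> \<rat>" for a
    using universal_no_rational_relation[OF t _ _ that(2,1), of "- 1"] by simp
qed

lemma universal_div_set_irrational:
  assumes t: "has_universal_expansion m t" "t \<noteq> 0"
  shows "div_set A t \<subseteq> - \<rat>"
  unfolding div_set_def
proof safe
  show False if "a \<in> A" "a \<noteq> 0" "a / t \<in> \<rat>" for a
    using universal_no_rational_relation[OF t(1) _ _ _ that(1), of "t / a" 0] that t(2)
      Rats_divide[OF Rats_1 that(3)] by simp
qed

lemma universal_inverse_scale_set_irrational:
  assumes t: "has_universal_expansion m (1 / t)" "t \<noteq> 0"
  shows "scale_set t A \<subseteq> - \<rat>"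
  unfolding scale_set_def
proof safe
  show False if "a \<in> A" "a \<noteq> 0" "t * a \<in> \<rat>" for a
    using universal_no_rational_relation[OF t(1) _ _ _ that(1), of "1 / (t * a)" 0] that t(2)
      Rats_divide[OF Rats_1 that(3)] by simp
qed

end

theorem corollary3:
  fixes m :: nat and F :: "nat list set" and A :: "real set"
  assumes m2: "m \<ge> 2"
    and finF: "finite F"
    and A_def: "A = madic_value m ` sft m F"
    and nowhere_dense: "interior (closure A) = {}"
  shows "(\<forall>t. 0 < t \<and> t < 1 \<and> has_universal_expansion m t \<longrightarrow>
            (\<lambda>x. x - t) ` A \<subseteq> - \<rat> \<and> (\<lambda>x. x + t) ` A \<subseteq> - \<rat> \<and> div_set A t \<subseteq> - \<rat>)
       \<and> (\<forall>t. 1 < t \<and> has_universal_expansion m (1 / t) \<longrightarrow> scale_set t A \<subseteq> - \<rat>)"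
proof -
  have A_subset: "A \<subseteq> {0..1}"
    unfolding A_def by (rule madic_image_sft_subset[OF m2])
  have A_shift: "\<forall>a\<in>A. \<forall>n. \<exists>a'\<in>A. real m ^ n * a - a' \<in> \<int>"
    unfolding A_def using madic_image_sft_shift_Ints[OF m2] by blast
  note A_facts = m2 A_subset A_shift nowhere_dense
  show ?thesis
    using universal_translates_irrational[OF A_facts] universal_div_set_irrational[OF A_facts]
      universal_inverse_scale_set_irrational[OF A_facts] by auto
qed

end
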